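(* Consider the voting game described in the context with complete information (all voters' types are common knowledge). Under liquid democracy there exists a best equilibrium (in terms of information aggregation) $\sigma$, and the probability that the election outcome matches the state under $\sigma$ is at least as large as under the best equilibrium of direct democracy and at least as large as under the best equilibrium of representative democracy.
   Context: Voters $\mathcal N=\{1,\dots,N\}$ choose between alternatives $A$ and $B$; the alternative receiving a simple majority of the votes cast wins, ties broken uniformly at random. There is an unknown state $\omega\in\{a,b\}$ with common prior $\Pr(\omega=a)=\pi\in(0,1)$. Each voter $i$ has a type $t_i=(p_i,q_i)$ with preference $p_i\in\{A,B,I\}$ and precision $q_i\in[1/2,1]$. An independent voter ($p_i=I$) gets payoff $1$ if the outcome is $A$ and $\omega=a$ or the outcome is $B$ and $\omega=b$, and $0$ otherwise; a partisan with $p_i=A$ (resp. $p_i=B$) gets payoff $1$ iff the outcome is $A$ (resp. $B$), else $0$. Each voter $i$ observes a private signal $s_i\in\{a,b\}$ with $\Pr(s_i=\omega\mid\omega)=q_i$, signals independent conditional on $\omega$. A (pure interim) strategy of voter $i$ maps her signal to an action. Direct democracy (DD): actions are $a$ (vote for $A$), $b$ (vote for $B$), $x$ (abstain). Liquid democracy (LD): additionally $d_j$ (delegate to voter $j\neq i$); delegation is transitive (votes held by a delegator pass on to whomever she delegates to), all votes held by voters in a delegation cycle are abstained, and a voter who does not delegate casts all votes she holds (her own plus those delegated to her) for the alternative she chooses or abstains all of them. Representative democracy (RD): there is a fixed set of representatives $\mathcal J$ consisting of some subset of $\mathcal N$ together with two non-strategic representatives $a^*,b^*\notin\mathcal N$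 who always vote for $A$ and $B$ respectively; a representative in $\mathcal N$ chooses among $a,b,x$, and a non-representative chooses between abstaining and delegating to some representative in $\mathcal J$. An equilibrium is a Bayes Nash equilibrium in which no voter uses a weakly dominated strategy. An equilibrium is a best equilibrium (in terms of information aggregation) if it maximizes, among equilibria of the mechanism, the probability that the outcome matches the state (outcome $A$ when $\omega=a$, outcome $B$ when $\omega=b$). *)

theory Defs
  imports Complex_Main
begin

text \<open>Voters are the elements of a finite type 'v. States and signals are booleans:
  True stands for a (resp. signal a), False for b.\<close>

datatype pref = PrefA | PrefB | PrefI

text \<open>Actions: vote for A (Vote True) / B (Vote False), abstain, delegate to a voter,
  or (only in representative democracy) delegate to the non-strategic representative
  a* (DelegStar True) or b* (DelegStar False).\<close>
datatype 'v act = Vote bool | Abstain | Deleg 'v | DelegStar bool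

definition DD_actions :: "'v \<Rightarrow> 'v act set" where
  "DD_actions i = {Vote True, Vote False, Abstain}"

definition LD_actions :: "'v \<Rightarrow> 'v act set" where
  "LD_actions i = {Vote True, Vote False, Abstain} \<union> {Deleg j | j. j \<noteq> i}"

definition RD_actions :: "'v set \<Rightarrow> 'v \<Rightarrow> 'v act set" where
  "RD_actions J i = (if i \<in> J then {Vote True, Vote False, Abstain}
                     else {Abstain, DelegStar True, DelegStar False} \<union> Deleg ` J)"

text \<open>After CARD('v) steps one is
  either at a voter who does not delegate (the end of the chain), or still at a
  delegating voter, which happens exactly when the chain runs into a cycle.\<close>
definition next_voter :: "('v \<Rightarrow> 'v act) \<Rightarrow> 'v \<Rightarrow> 'v" where
  "next_voter a i = (case a i of Deleg j \<Rightarrow> j | _ \<Rightarrow> i)"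

definition chain_end :: "('v::finite \<Rightarrow> 'v act) \<Rightarrow> 'v \<Rightarrow> 'v" where
  "chain_end a i = (next_voter a ^^ card (UNIV :: 'v set)) i"

text \<open>Where the vote owned by voter i ends up: Some True = counted for A,
  Some False = counted for B, None = abstained (including cycles).\<close>
definition ballot :: "('v::finite \<Rightarrow> 'v act) \<Rightarrow> 'v \<Rightarrow> bool option" where
  "ballot a i = (case a (chain_end a i) of
       Vote x \<Rightarrow> Some x | DelegStar x \<Rightarrow> Some x | Abstain \<Rightarrow> None | Deleg _ \<Rightarrow> None)"

definition votes_for :: "('v::finite \<Rightarrow> 'v act) \<Rightarrow> bool \<Rightarrow> nat" where
  "votes_for a x = card {i. ballot a i = Some x}"

definition probA :: "('v::finite \<Rightarrow> 'v act) \<Rightarrow> real" where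
  "probA a = (if votes_for a True > votes_for a False then 1
              else if votes_for a True = votes_for a False then 1/2 else 0)"

definition joint_prob :: "real \<Rightarrow> ('v::finite \<Rightarrow> real) \<Rightarrow> bool \<Rightarrow> ('v \<Rightarrow> bool) \<Rightarrow> real" where
  "joint_prob \<pi> q w s = (if w then \<pi> else 1 - \<pi>) *
      (\<Prod>i\<in>UNIV. if s i = w then q i else 1 - q i)"

definition payoff :: "pref \<Rightarrow> bool \<Rightarrow> real \<Rightarrow> real" where
  "payoff pr w pA = (case pr of PrefA \<Rightarrow> pA | PrefB \<Rightarrow> 1 - pA
                     | PrefI \<Rightarrow> (if w then pA else 1 - pA))"

text \<open>Strategy profiles: sigma i maps voter i's signal to an action.\<close>
type_synonym 'v profile = "'v \<Rightarrow> bool \<Rightarrow> 'v act"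

definition valid_profile :: "('v \<Rightarrow> 'v act set) \<Rightarrow> 'v profile \<Rightarrow> bool" where
  "valid_profile M \<sigma> \<longleftrightarrow> (\<forall>i x. \<sigma> i x \<in> M i)"

definition valid_strategy :: "('v \<Rightarrow> 'v act set) \<Rightarrow> 'v \<Rightarrow> (bool \<Rightarrow> 'v act) \<Rightarrow> bool" where
  "valid_strategy M i \<tau> \<longleftrightarrow> (\<forall>x. \<tau> x \<in> M i)"

definition exp_util :: "real \<Rightarrow> ('v::finite \<Rightarrow> pref) \<Rightarrow> ('v \<Rightarrow> real) \<Rightarrow> 'v \<Rightarrow> 'v profile \<Rightarrow> real" where
  "exp_util \<pi> p q i \<sigma> = (\<Sum>w\<in>UNIV. \<Sum>s\<in>UNIV.
      joint_prob \<pi> q w s * payoff (p i) w (probA (\<lambda>j. \<sigma> j (s j))))"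

definition interim_util :: "real \<Rightarrow> ('v::finite \<Rightarrow> pref) \<Rightarrow> ('v \<Rightarrow> real) \<Rightarrow> 'v \<Rightarrow> bool \<Rightarrow> 'v profile \<Rightarrow> real" where
  "interim_util \<pi> p q i x \<sigma> =
     (\<Sum>w\<in>UNIV. \<Sum>s\<in>{s. s i = x}. joint_prob \<pi> q w s * payoff (p i) w (probA (\<lambda>j. \<sigma> j (s j))))
     / (\<Sum>w\<in>UNIV. \<Sum>s\<in>{s. s i = x}. joint_prob \<pi> q w s)"

definition bayes_nash :: "real \<Rightarrow> ('v::finite \<Rightarrow> pref) \<Rightarrow> ('v \<Rightarrow> real) \<Rightarrow> ('v \<Rightarrow> 'v act set) \<Rightarrow> 'v profile \<Rightarrow> bool" where
  "bayes_nash \<pi> p q M \<sigma> \<longleftrightarrow> valid_profile M \<sigma> \<and>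
     (\<forall>i x c. c \<in> M i \<longrightarrow>
        interim_util \<pi> p q i x (\<sigma>(i := (\<sigma> i)(x := c))) \<le> interim_util \<pi> p q i x \<sigma>)"

definition weakly_dominated :: "real \<Rightarrow> ('v::finite \<Rightarrow> pref) \<Rightarrow> ('v \<Rightarrow> real) \<Rightarrow> ('v \<Rightarrow> 'v act set) \<Rightarrow> 'v \<Rightarrow> (bool \<Rightarrow> 'v act) \<Rightarrow> bool" where
  "weakly_dominated \<pi> p q M i \<tau> \<longleftrightarrow> (\<exists>\<tau>'. valid_strategy M i \<tau>' \<and>
      (\<forall>\<sigma>. valid_profile M \<sigma> \<longrightarrow> exp_util \<pi> p q i (\<sigma>(i := \<tau>)) \<le> exp_util \<pi> p q i (\<sigma>(i := \<tau>'))) \<and>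
      (\<exists>\<sigma>. valid_profile M \<sigma> \<and> exp_util \<pi> p q i (\<sigma>(i := \<tau>)) < exp_util \<pi> p q i (\<sigma>(i := \<tau>'))))"

definition equilibrium :: "real \<Rightarrow> ('v::finite \<Rightarrow> pref) \<Rightarrow> ('v \<Rightarrow> real) \<Rightarrow> ('v \<Rightarrow> 'v act set) \<Rightarrow> 'v profile \<Rightarrow> bool" where
  "equilibrium \<pi> p q M \<sigma> \<longleftrightarrow> bayes_nash \<pi> p q M \<sigma> \<and>
      (\<forall>i. \<not> weakly_dominated \<pi> p q M i (\<sigma> i))"

definition prob_correct :: "real \<Rightarrow> ('v::finite \<Rightarrow> real) \<Rightarrow> 'v profile \<Rightarrow> real" where
  "prob_correct \<pi> q \<sigma> = (\<Sum>w\<in>UNIV. \<Sum>s\<in>UNIV.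
      joint_prob \<pi> q w s * (if w then probA (\<lambda>j. \<sigma> j (s j)) else 1 - probA (\<lambda>j. \<sigma> j (s j))))"

definition best_equilibrium :: "real \<Rightarrow> ('v::finite \<Rightarrow> pref) \<Rightarrow> ('v \<Rightarrow> real) \<Rightarrow> ('v \<Rightarrow> 'v act set) \<Rightarrow> 'v profile \<Rightarrow> bool" where
  "best_equilibrium \<pi> p q M \<sigma> \<longleftrightarrow> equilibrium \<pi> p q M \<sigma> \<and>
      (\<forall>\<sigma>'. equilibrium \<pi> p q M \<sigma>' \<longrightarrow> prob_correct \<pi> q \<sigma>' \<le> prob_correct \<pi> q \<sigma>)"

end

theory Submission
  imports Defs
begin

text \<open>Casting one's vote for b, directly or through a non-strategic representative, can only
  move ballots towards b, so voting sincerely is weakly dominant for a partisan. In an equilibrium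
  of DD, LD or RD a partisan's strategy is not weakly dominated, so replacing it by the sincere vote
  leaves her expected payoff unchanged, which forces the same probability of A winning on every
  signal profile of positive probability. Rewriting the delegations to a* and b* as direct votes
  then gives an LD profile in which partisans vote sincerely and which decides correctly with the
  same probability. It thus suffices to find an LD equilibrium maximising this probability over
  the finitely many such profiles. A maximiser is a Bayes Nash equilibrium, because the payoff of
  an independent is exactly this probability; and among the maximisers, one minimising the total
  number of strategies that weakly dominate the voters' strategies uses no weakly dominated
  strategy, because weak dominance is transitive.\<close>

lemma funpow_next_voter_fun_upd_vote:
  assumes "c = Vote b \<or> c = DelegStar b"
  shows "(next_voter (a(i := c)) ^^ n) k \<in> {(next_voter a ^^ n) k, i}"
proof (induction n)
  case 0
  then show ?case by simp
next
  case (Suc n)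
  have "next_voter (a(i := c)) i = i" and "m \<noteq> i \<Longrightarrow> next_voter (a(i := c)) m = next_voter a m" for m
    using assms by (auto simp: next_voter_def)
  with Suc show ?case
    by (cases "(next_voter (a(i := c)) ^^ n) k = i") (auto simp del: fun_upd_apply)
qed

lemma ballot_fun_upd_vote:
  assumes "c = Vote b \<or> c = DelegStar b"
  shows "ballot (a(i := c)) k \<in> {ballot a k, Some b}"
proof -
  have "chain_end (a(i := c)) k \<in> {chain_end a k, i}"
    unfolding chain_end_def by (rule funpow_next_voter_fun_upd_vote[OF assms])
  then show ?thesis
    using assms by (auto simp: ballot_def)
qed

lemma probA_fun_upd_vote:
  assumes "c = Vote b \<or> c = DelegStar b"
  shows "if b then probA a \<le> probA (a(i := c)) else probA (a(i := c)) \<le> probA a"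
proof -
  have "ballot (a(i := c)) k = Some b" if "ballot a k = Some b" for k
    using ballot_fun_upd_vote[OF assms, of a i k] that by auto
  moreover have "ballot a k = Some (\<not> b)" if "ballot (a(i := c)) k = Some (\<not> b)" for k
    using ballot_fun_upd_vote[OF assms, of a i k] that by auto
  ultimately have "votes_for a b \<le> votes_for (a(i := c)) b"
    and "votes_for (a(i := c)) (\<not> b) \<le> votes_for a (\<not> b)"
    unfolding votes_for_def by (auto intro!: card_mono)
  then show ?thesis
    by (cases b) (auto simp: probA_def)
qed

lemma payoff_le_fun_upd_vote:
  assumes "pr \<noteq> PrefI" and "c = Vote (pr = PrefA) \<or> c = DelegStar (pr = PrefA)"
  shows "payoff pr w (probA a) \<le> payoff pr w (probA (a(i := c)))"
  using probA_fun_upd_vote[OF assms(2), of a i] assms(1)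
  by (cases pr) (auto simp: payoff_def)

fun vote_of_star :: "'v act \<Rightarrow> 'v act" where
  "vote_of_star (DelegStar b) = Vote b"
| "vote_of_star a = a"

lemma next_voter_vote_of_star: "next_voter (\<lambda>j. vote_of_star (a j)) = next_voter a"
  by (rule ext) (simp add: next_voter_def split: act.split)

lemma ballot_vote_of_star: "ballot (\<lambda>j. vote_of_star (a j)) = ballot a"
  by (rule ext) (simp add: ballot_def chain_end_def next_voter_vote_of_star split: act.split)

lemma probA_vote_of_star: "probA (\<lambda>j. vote_of_star (a j)) = probA a"
  unfolding probA_def votes_for_def ballot_vote_of_star ..

lemma prob_correct_vote_of_star:
  "prob_correct \<pi> q (\<lambda>i x. vote_of_star (\<sigma> i x)) = prob_correct \<pi> q \<sigma>"
  unfolding prob_correct_def by (simp only: probA_vote_of_star)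

text \<open>Only meaningful for partisans; for an independent it is an arbitrary vote.\<close>
definition sincere :: "('v \<Rightarrow> 'v act set) \<Rightarrow> ('v \<Rightarrow> pref) \<Rightarrow> 'v \<Rightarrow> bool \<Rightarrow> 'v act" where
  "sincere M p i = (\<lambda>_. if Vote (p i = PrefA) \<in> M i then Vote (p i = PrefA) else DelegStar (p i = PrefA))"

lemma sincere_cases: "sincere M p i x = Vote (p i = PrefA) \<or> sincere M p i x = DelegStar (p i = PrefA)"
  by (simp add: sincere_def)

lemma vote_of_star_sincere: "vote_of_star (sincere M p i x) = Vote (p i = PrefA)"
  by (simp add: sincere_def)

lemma sincere_LD: "sincere LD_actions p i = (\<lambda>_. Vote (p i = PrefA))"
  by (simp add: sincere_def LD_actions_def)

lemma payoff_le_sincere: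
  assumes "p i \<noteq> PrefI"
  shows "payoff (p i) w (probA (\<lambda>j. (\<sigma>(i := \<tau>)) j (s j)))
    \<le> payoff (p i) w (probA (\<lambda>j. (\<sigma>(i := sincere M p i)) j (s j)))"
proof -
  have "(\<lambda>j. (\<sigma>(i := sincere M p i)) j (s j)) = (\<lambda>j. (\<sigma>(i := \<tau>)) j (s j))(i := sincere M p i (s i))"
    by auto
  then show ?thesis
    using payoff_le_fun_upd_vote[OF assms sincere_cases[of M p i "s i"]] by presburger
qed

definition reduces_to_LD :: "('v \<Rightarrow> 'v act set) \<Rightarrow> bool" where
  "reduces_to_LD M \<longleftrightarrow> (\<forall>i b. Vote b \<in> M i \<or> DelegStar b \<in> M i) \<and>
     (\<forall>i a. a \<in> M i \<longrightarrow> vote_of_star a \<in> LD_actions i)"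

lemma reduces_to_LD_LD: "reduces_to_LD LD_actions"
  unfolding reduces_to_LD_def LD_actions_def by (auto elim: vote_of_star.elims)

lemma reduces_to_LD_DD: "reduces_to_LD DD_actions"
  unfolding reduces_to_LD_def LD_actions_def DD_actions_def by auto

lemma reduces_to_LD_RD: "reduces_to_LD (RD_actions J)"
  unfolding reduces_to_LD_def LD_actions_def RD_actions_def by auto

lemma valid_strategy_sincere: "reduces_to_LD M \<Longrightarrow> valid_strategy M i (sincere M p i)"
  by (auto simp: reduces_to_LD_def valid_strategy_def sincere_def)

lemma valid_profile_vote_of_star:
  "reduces_to_LD M \<Longrightarrow> valid_profile M \<sigma> \<Longrightarrow> valid_profile LD_actions (\<lambda>i x. vote_of_star (\<sigma> i x))"
  by (simp add: reduces_to_LD_def valid_profile_def)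

definition sincerify :: "('v \<Rightarrow> 'v act set) \<Rightarrow> ('v \<Rightarrow> pref) \<Rightarrow> 'v set \<Rightarrow> 'v profile \<Rightarrow> 'v profile" where
  "sincerify M p P \<sigma> = (\<lambda>i. if i \<in> P \<and> p i \<noteq> PrefI then sincere M p i else \<sigma> i)"

lemma valid_profile_sincerify:
  "reduces_to_LD M \<Longrightarrow> valid_profile M \<sigma> \<Longrightarrow> valid_profile M (sincerify M p P \<sigma>)"
  using valid_strategy_sincere[of M _ p] by (auto simp: valid_profile_def valid_strategy_def sincerify_def)

definition sincere_LD_profiles :: "('v \<Rightarrow> pref) \<Rightarrow> 'v profile set" where
  "sincere_LD_profiles p =
     {\<sigma>. valid_profile LD_actions \<sigma> \<and> (\<forall>i. p i \<noteq> PrefI \<longrightarrow> \<sigma> i = sincere LD_actions p i)}"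

lemma exp_util_eq_prob_correct: "p i = PrefI \<Longrightarrow> exp_util \<pi> p q i \<sigma> = prob_correct \<pi> q \<sigma>"
  by (simp add: exp_util_def prob_correct_def payoff_def)

definition weighted_payoff ::
    "real \<Rightarrow> ('v::finite \<Rightarrow> pref) \<Rightarrow> ('v \<Rightarrow> real) \<Rightarrow> 'v \<Rightarrow> ('v \<Rightarrow> bool) set \<Rightarrow> 'v profile \<Rightarrow> real" where
  "weighted_payoff \<pi> p q i T \<sigma> =
     (\<Sum>w\<in>UNIV. \<Sum>s\<in>T. joint_prob \<pi> q w s * payoff (p i) w (probA (\<lambda>j. \<sigma> j (s j))))"

lemma exp_util_eq_weighted_payoff: "exp_util \<pi> p q i \<sigma> = weighted_payoff \<pi> p q i UNIV \<sigma>"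
  unfolding exp_util_def weighted_payoff_def ..

lemma interim_util_eq_weighted_payoff:
  "interim_util \<pi> p q i x \<sigma> =
     weighted_payoff \<pi> p q i {s. s i = x} \<sigma> / (\<Sum>w\<in>UNIV. \<Sum>s\<in>{s. s i = x}. joint_prob \<pi> q w s)"
  unfolding interim_util_def weighted_payoff_def ..

lemma weighted_payoff_split:
  "weighted_payoff \<pi> p q i UNIV \<sigma> =
     weighted_payoff \<pi> p q i {s. s i = x} \<sigma> + weighted_payoff \<pi> p q i {s. s i \<noteq> x} \<sigma>"
  unfolding weighted_payoff_def sum.distrib[symmetric]
  by (intro sum.cong refl) (simp add: sum.Int_Diff[of UNIV _ "{s. s i = x}"] Compl_eq set_diff_eq)

lemma finite_valid_strategies:
  assumes "finite (\<Union>i. M i)"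
  shows "finite {\<tau>. valid_strategy M i \<tau>}"
proof (rule finite_subset)
  show "{\<tau>. valid_strategy M i \<tau>} \<subseteq> {\<tau>. \<forall>x. \<tau> x \<in> (\<Union>i. M i)}"
    by (auto simp: valid_strategy_def)
  show "finite {\<tau> :: bool \<Rightarrow> _. \<forall>x. \<tau> x \<in> (\<Union>i. M i)}"
    using finite_set_of_finite_funs[OF finite_UNIV assms] by simp
qed

lemma finite_valid_profiles:
  assumes "finite (\<Union>i. M i)"
  shows "finite {\<sigma> :: 'v::finite profile. valid_profile M \<sigma>}"
proof (rule finite_subset)
  let ?S = "\<Union>i. {\<tau>. valid_strategy M i \<tau>}"
  show "{\<sigma>. valid_profile M \<sigma>} \<subseteq> {\<sigma>. \<forall>i. \<sigma> i \<in> ?S}"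
    by (auto simp: valid_profile_def valid_strategy_def)
  show "finite {\<sigma> :: 'v profile. \<forall>i. \<sigma> i \<in> ?S}"
    using finite_set_of_finite_funs[OF finite_UNIV, of ?S] finite_valid_strategies[OF assms] by simp
qed

lemma finite_LD_actions: "finite (\<Union>i. LD_actions (i :: 'v::finite))"
  by (rule finite_subset[of _ "{Vote True, Vote False, Abstain} \<union> range Deleg"])
    (auto simp: LD_actions_def)

definition dominators ::
    "real \<Rightarrow> ('v::finite \<Rightarrow> pref) \<Rightarrow> ('v \<Rightarrow> real) \<Rightarrow> ('v \<Rightarrow> 'v act set) \<Rightarrow> 'v \<Rightarrow>
      (bool \<Rightarrow> 'v act) \<Rightarrow> (bool \<Rightarrow> 'v act) set" where
  "dominators \<pi> p q M i \<tau> = {\<tau>'. valid_strategy M i \<tau>' \<and>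
      (\<forall>\<sigma>. valid_profile M \<sigma> \<longrightarrow> exp_util \<pi> p q i (\<sigma>(i := \<tau>)) \<le> exp_util \<pi> p q i (\<sigma>(i := \<tau>'))) \<and>
      (\<exists>\<sigma>. valid_profile M \<sigma> \<and> exp_util \<pi> p q i (\<sigma>(i := \<tau>)) < exp_util \<pi> p q i (\<sigma>(i := \<tau>')))}"

lemma weakly_dominated_iff_dominators:
  "weakly_dominated \<pi> p q M i \<tau> \<longleftrightarrow> dominators \<pi> p q M i \<tau> \<noteq> {}"
  by (auto simp: weakly_dominated_def dominators_def)

lemma dominators_psubset:
  assumes "\<tau>' \<in> dominators \<pi> p q M i \<tau>"
  shows "dominators \<pi> p q M i \<tau>' \<subset> dominators \<pi> p q M i \<tau>"
proof
  let ?u = "\<lambda>\<sigma> \<tau>. exp_util \<pi> p q i (\<sigma>(i := \<tau>))"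
  obtain \<sigma>\<^sub>0 where \<sigma>\<^sub>0: "valid_profile M \<sigma>\<^sub>0" "?u \<sigma>\<^sub>0 \<tau> < ?u \<sigma>\<^sub>0 \<tau>'"
    using assms by (auto simp: dominators_def)
  have le: "valid_profile M \<sigma> \<Longrightarrow> ?u \<sigma> \<tau> \<le> ?u \<sigma> \<tau>'" for \<sigma>
    using assms by (simp add: dominators_def)
  show "dominators \<pi> p q M i \<tau>' \<subseteq> dominators \<pi> p q M i \<tau>"
  proof
    fix \<tau>'' assume "\<tau>'' \<in> dominators \<pi> p q M i \<tau>'"
    then have "valid_strategy M i \<tau>''" and le': "valid_profile M \<sigma> \<Longrightarrow> ?u \<sigma> \<tau>' \<le> ?u \<sigma> \<tau>''" for \<sigma>
      by (simp_all add: dominators_def)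
    moreover have "valid_profile M \<sigma> \<Longrightarrow> ?u \<sigma> \<tau> \<le> ?u \<sigma> \<tau>''" for \<sigma>
      using le le' by (rule order_trans)
    moreover have "?u \<sigma>\<^sub>0 \<tau> < ?u \<sigma>\<^sub>0 \<tau>''"
      using \<sigma>\<^sub>0(2) le'[OF \<sigma>\<^sub>0(1)] by (rule less_le_trans)
    ultimately show "\<tau>'' \<in> dominators \<pi> p q M i \<tau>"
      using \<sigma>\<^sub>0(1) by (auto simp: dominators_def)
  qed
  show "dominators \<pi> p q M i \<tau>' \<noteq> dominators \<pi> p q M i \<tau>"
    using assms by (auto simp: dominators_def)
qed

definition domination_count ::
    "real \<Rightarrow> ('v::finite \<Rightarrow> pref) \<Rightarrow> ('v \<Rightarrow> real) \<Rightarrow> ('v \<Rightarrow> 'v act set) \<Rightarrow> 'v profile \<Rightarrow> nat" where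
  "domination_count \<pi> p q M \<sigma> = (\<Sum>i\<in>UNIV. card (dominators \<pi> p q M i (\<sigma> i)))"

lemma domination_count_fun_upd_dominator:
  assumes "finite (\<Union>i. M i)" and "\<tau> \<in> dominators \<pi> p q M i (\<sigma> i)"
  shows "domination_count \<pi> p q M (\<sigma>(i := \<tau>)) < domination_count \<pi> p q M \<sigma>"
proof -
  have "finite (dominators \<pi> p q M i (\<sigma> i))"
    using finite_valid_strategies[OF assms(1)] by (rule rev_finite_subset) (auto simp: dominators_def)
  then have "card (dominators \<pi> p q M i \<tau>) < card (dominators \<pi> p q M i (\<sigma> i))"
    using dominators_psubset[OF assms(2)] by (rule psubset_card_mono)
  then show ?thesis
    unfolding domination_count_def by (intro sum_strict_mono_ex1) auto
qed

locale voting_game =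
  fixes \<pi> :: real and p :: "'v::finite \<Rightarrow> pref" and q :: "'v \<Rightarrow> real"
  assumes prior_nonneg: "0 \<le> \<pi>" and prior_le_1: "\<pi> \<le> 1"
    and precision_nonneg: "0 \<le> q i" and precision_le_1: "q i \<le> 1"
begin

lemma joint_prob_nonneg: "0 \<le> joint_prob \<pi> q w s"
  unfolding joint_prob_def
  using prior_nonneg prior_le_1 precision_nonneg precision_le_1
  by (auto intro!: mult_nonneg_nonneg prod_nonneg)

lemma weighted_payoff_le_sincere:
  assumes "p i \<noteq> PrefI"
  shows "weighted_payoff \<pi> p q i T (\<sigma>(i := \<tau>)) \<le> weighted_payoff \<pi> p q i T (\<sigma>(i := sincere M p i))"
  unfolding weighted_payoff_def
  by (intro sum_mono mult_left_mono joint_prob_nonneg payoff_le_sincere assms)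

lemma exp_util_le_sincere:
  "p i \<noteq> PrefI \<Longrightarrow> exp_util \<pi> p q i (\<sigma>(i := \<tau>)) \<le> exp_util \<pi> p q i (\<sigma>(i := sincere M p i))"
  unfolding exp_util_eq_weighted_payoff by (rule weighted_payoff_le_sincere)

lemma interim_util_le_sincere:
  assumes "p i \<noteq> PrefI" and "\<sigma> i = sincere M p i"
  shows "interim_util \<pi> p q i x (\<sigma>(i := \<tau>)) \<le> interim_util \<pi> p q i x \<sigma>"
proof -
  have "weighted_payoff \<pi> p q i {s. s i = x} (\<sigma>(i := \<tau>)) \<le> weighted_payoff \<pi> p q i {s. s i = x} \<sigma>"
    using weighted_payoff_le_sincere[OF assms(1)] assms(2) by (metis fun_upd_triv)
  then show ?thesis
    unfolding interim_util_eq_weighted_payoff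
    by (intro divide_right_mono sum_nonneg joint_prob_nonneg)
qed

lemma sincere_not_weakly_dominated:
  "p i \<noteq> PrefI \<Longrightarrow> \<not> weakly_dominated \<pi> p q M i (sincere M p i)"
  unfolding weakly_dominated_def using exp_util_le_sincere by (meson not_le)

lemma prob_correct_fun_upd_sincere:
  assumes partisan: "p i \<noteq> PrefI" and M: "reduces_to_LD M" and valid: "valid_profile M \<sigma>"
    and undominated: "\<not> weakly_dominated \<pi> p q M i (\<sigma> i)"
  shows "prob_correct \<pi> q (\<sigma>(i := sincere M p i)) = prob_correct \<pi> q \<sigma>"
proof -
  define f where "f \<sigma>' w s = joint_prob \<pi> q w s * payoff (p i) w (probA (\<lambda>j. \<sigma>' j (s j)))"
    for \<sigma>' w s
  let ?\<sigma>s = "\<sigma>(i := sincere M p i)"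
  have le: "f \<sigma> w s \<le> f ?\<sigma>s w s" for w s
    unfolding f_def
    using payoff_le_sincere[where p = p and i = i and \<sigma> = \<sigma> and \<tau> = "\<sigma> i" and M = M, OF partisan]
    by (intro mult_left_mono joint_prob_nonneg) simp
  have "exp_util \<pi> p q i \<sigma> = exp_util \<pi> p q i ?\<sigma>s"
  proof (rule antisym)
    show "exp_util \<pi> p q i \<sigma> \<le> exp_util \<pi> p q i ?\<sigma>s"
      using exp_util_le_sincere[OF partisan, of \<sigma> "\<sigma> i"] by simp
    show "exp_util \<pi> p q i ?\<sigma>s \<le> exp_util \<pi> p q i \<sigma>"
    proof (rule ccontr)
      assume "\<not> ?thesis"
      then have "weakly_dominated \<pi> p q M i (\<sigma> i)"
        unfolding weakly_dominated_def
        using valid valid_strategy_sincere[OF M] exp_util_le_sincere[OF partisan]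
        by (intro exI[of _ "sincere M p i"]) (auto intro!: exI[of _ \<sigma>])
      with undominated show False ..
    qed
  qed
  then have "(\<Sum>w\<in>UNIV. \<Sum>s\<in>UNIV. f \<sigma> w s) = (\<Sum>w\<in>UNIV. \<Sum>s\<in>UNIV. f ?\<sigma>s w s)"
    unfolding exp_util_def f_def .
  then have "(\<Sum>s\<in>UNIV. f \<sigma> w s) = (\<Sum>s\<in>UNIV. f ?\<sigma>s w s)" for w
    by (rule sum_mono_inv) (simp_all add: le sum_mono)
  then have "f \<sigma> w s = f ?\<sigma>s w s" for w s
    by (rule sum_mono_inv) (simp_all add: le)
  then have "joint_prob \<pi> q w s = 0 \<or> probA (\<lambda>j. \<sigma> j (s j)) = probA (\<lambda>j. ?\<sigma>s j (s j))" for w s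
    using partisan by (cases "p i") (auto simp: f_def payoff_def)
  then show ?thesis
    unfolding prob_correct_def by (intro sum.cong refl) force
qed

lemma prob_correct_sincerify:
  assumes "finite P" and M: "reduces_to_LD M" and eq: "equilibrium \<pi> p q M \<sigma>"
  shows "prob_correct \<pi> q (sincerify M p P \<sigma>) = prob_correct \<pi> q \<sigma>"
  using assms(1)
proof (induction P rule: finite_induct)
  case empty
  then show ?case by (simp add: sincerify_def)
next
  case (insert i P)
  show ?case
  proof (cases "p i = PrefI")
    case True
    then have "sincerify M p (insert i P) \<sigma> = sincerify M p P \<sigma>"
      by (auto simp: sincerify_def)
    with insert.IH show ?thesis by simp
  next
    case False
    have valid: "valid_profile M (sincerify M p P \<sigma>)"
      using eq valid_profile_sincerify[OF M] by (simp add: equilibrium_def bayes_nash_def)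
    have "sincerify M p P \<sigma> i = \<sigma> i"
      using insert.hyps by (simp add: sincerify_def)
    then have undominated: "\<not> weakly_dominated \<pi> p q M i (sincerify M p P \<sigma> i)"
      using eq by (simp add: equilibrium_def)
    have "sincerify M p (insert i P) \<sigma> = (sincerify M p P \<sigma>)(i := sincere M p i)"
      using False by (auto simp: sincerify_def)
    with prob_correct_fun_upd_sincere[OF False M valid undominated] insert.IH show ?thesis
      by (simp only:)
  qed
qed

lemma equilibrium_prob_correct_in_sincere_LD:
  assumes M: "reduces_to_LD M" and eq: "equilibrium \<pi> p q M \<sigma>"
  obtains \<sigma>' where "\<sigma>' \<in> sincere_LD_profiles p" and "prob_correct \<pi> q \<sigma>' = prob_correct \<pi> q \<sigma>"
proof
  let ?\<rho> = "sincerify M p UNIV \<sigma>"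
  have "valid_profile M \<sigma>"
    using eq by (simp add: equilibrium_def bayes_nash_def)
  then show "(\<lambda>i x. vote_of_star (?\<rho> i x)) \<in> sincere_LD_profiles p"
    using valid_profile_vote_of_star[OF M valid_profile_sincerify[OF M, where P = UNIV and p = p]]
    by (auto simp: sincere_LD_profiles_def sincerify_def sincere_LD vote_of_star_sincere)
  show "prob_correct \<pi> q (\<lambda>i x. vote_of_star (?\<rho> i x)) = prob_correct \<pi> q \<sigma>"
    by (simp add: prob_correct_vote_of_star prob_correct_sincerify[OF finite_UNIV M eq])
qed

lemma exp_util_less_if_interim_util_less:
  assumes "interim_util \<pi> p q i x \<sigma> < interim_util \<pi> p q i x (\<sigma>(i := (\<sigma> i)(x := c)))"
  shows "exp_util \<pi> p q i \<sigma> < exp_util \<pi> p q i (\<sigma>(i := (\<sigma> i)(x := c)))"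
proof -
  let ?\<delta> = "\<sigma>(i := (\<sigma> i)(x := c))"
  let ?W = "weighted_payoff \<pi> p q i"
  have "0 \<le> (\<Sum>w\<in>UNIV. \<Sum>s\<in>{s. s i = x}. joint_prob \<pi> q w s)"
    by (intro sum_nonneg joint_prob_nonneg)
  then have "?W {s. s i = x} \<sigma> < ?W {s. s i = x} ?\<delta>"
    using assms unfolding interim_util_eq_weighted_payoff by (auto simp: divide_less_cancel)
  moreover have "(\<lambda>j. ?\<delta> j (s j)) = (\<lambda>j. \<sigma> j (s j))" if "s i \<noteq> x" for s
    using that by auto
  then have "?W {s. s i \<noteq> x} ?\<delta> = ?W {s. s i \<noteq> x} \<sigma>"
    unfolding weighted_payoff_def by (intro sum.cong refl) simp
  ultimately show ?thesis
    unfolding exp_util_eq_weighted_payoff weighted_payoff_split[where x = x] by simp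
qed

lemma sincere_LD_maximiser_bayes_nash:
  assumes S: "\<sigma> \<in> sincere_LD_profiles p"
    and max: "\<And>\<sigma>'. \<sigma>' \<in> sincere_LD_profiles p \<Longrightarrow> prob_correct \<pi> q \<sigma>' \<le> prob_correct \<pi> q \<sigma>"
  shows "bayes_nash \<pi> p q LD_actions \<sigma>"
  unfolding bayes_nash_def
proof (intro conjI allI impI)
  show "valid_profile LD_actions \<sigma>"
    using S by (simp add: sincere_LD_profiles_def)
  fix i :: 'v and x c
  assume c: "c \<in> LD_actions i"
  show "interim_util \<pi> p q i x (\<sigma>(i := (\<sigma> i)(x := c))) \<le> interim_util \<pi> p q i x \<sigma>"
  proof (cases "p i = PrefI")
    case False
    then show ?thesis
      using S by (intro interim_util_le_sincere) (simp_all add: sincere_LD_profiles_def)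
  next
    case True
    let ?\<delta> = "\<sigma>(i := (\<sigma> i)(x := c))"
    have "?\<delta> \<in> sincere_LD_profiles p"
      using S c True by (auto simp: sincere_LD_profiles_def valid_profile_def)
    then have "exp_util \<pi> p q i ?\<delta> \<le> exp_util \<pi> p q i \<sigma>"
      using max True by (simp add: exp_util_eq_prob_correct)
    then show ?thesis
      using exp_util_less_if_interim_util_less by (meson not_le)
  qed
qed

lemma sincere_LD_maximiser_undominated:
  assumes S: "\<sigma> \<in> sincere_LD_profiles p"
    and max: "\<And>\<sigma>'. \<sigma>' \<in> sincere_LD_profiles p \<Longrightarrow> prob_correct \<pi> q \<sigma>' \<le> prob_correct \<pi> q \<sigma>"
    and min: "\<And>\<sigma>'. \<sigma>' \<in> sincere_LD_profiles p \<Longrightarrow> prob_correct \<pi> q \<sigma>' = prob_correct \<pi> q \<sigma> \<Longrightarrow>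
      domination_count \<pi> p q LD_actions \<sigma> \<le> domination_count \<pi> p q LD_actions \<sigma>'"
  shows "\<not> weakly_dominated \<pi> p q LD_actions i (\<sigma> i)"
proof (cases "p i = PrefI")
  case False
  then show ?thesis
    using S sincere_not_weakly_dominated by (simp add: sincere_LD_profiles_def)
next
  case True
  show ?thesis
  proof
    assume "weakly_dominated \<pi> p q LD_actions i (\<sigma> i)"
    then obtain \<tau> where \<tau>: "\<tau> \<in> dominators \<pi> p q LD_actions i (\<sigma> i)"
      by (auto simp: weakly_dominated_iff_dominators)
    have S': "\<sigma>(i := \<tau>) \<in> sincere_LD_profiles p"
      using S \<tau> True by (auto simp: sincere_LD_profiles_def dominators_def valid_profile_def valid_strategy_def)
    have "exp_util \<pi> p q i (\<sigma>(i := \<sigma> i)) \<le> exp_util \<pi> p q i (\<sigma>(i := \<tau>))"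
      using \<tau> S unfolding dominators_def sincere_LD_profiles_def by blast
    then have "prob_correct \<pi> q (\<sigma>(i := \<tau>)) = prob_correct \<pi> q \<sigma>"
      using max[OF S'] True by (simp add: exp_util_eq_prob_correct)
    then have "domination_count \<pi> p q LD_actions \<sigma> \<le> domination_count \<pi> p q LD_actions (\<sigma>(i := \<tau>))"
      by (rule min[OF S'])
    with domination_count_fun_upd_dominator[where \<sigma> = \<sigma> and i = i, OF finite_LD_actions \<tau>] show False
      by simp
  qed
qed

lemma best_sincere_LD_equilibrium_exists:
  obtains \<sigma> where "\<sigma> \<in> sincere_LD_profiles p" and "equilibrium \<pi> p q LD_actions \<sigma>"
    and "\<And>\<sigma>'. \<sigma>' \<in> sincere_LD_profiles p \<Longrightarrow> prob_correct \<pi> q \<sigma>' \<le> prob_correct \<pi> q \<sigma>"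
proof -
  let ?S = "sincere_LD_profiles p"
  let ?m = "Max (prob_correct \<pi> q ` ?S)"
  have fin: "finite ?S"
    using finite_valid_profiles[OF finite_LD_actions]
    by (rule rev_finite_subset) (auto simp: sincere_LD_profiles_def)
  then have max: "prob_correct \<pi> q \<sigma> \<le> ?m" if "\<sigma> \<in> ?S" for \<sigma>
    using that by simp
  have "sincere LD_actions p \<in> ?S"
    by (simp add: sincere_LD_profiles_def valid_profile_def sincere_LD LD_actions_def)
  then have "?m \<in> prob_correct \<pi> q ` ?S"
    using fin by (intro Max_in) auto
  then obtain \<sigma>\<^sub>0 where \<sigma>\<^sub>0: "\<sigma>\<^sub>0 \<in> ?S \<and> prob_correct \<pi> q \<sigma>\<^sub>0 = ?m"
    by auto
  then obtain \<sigma> where \<sigma>: "\<sigma> \<in> ?S \<and> prob_correct \<pi> q \<sigma> = ?m"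
    and min: "\<And>\<sigma>'. \<sigma>' \<in> ?S \<and> prob_correct \<pi> q \<sigma>' = ?m \<Longrightarrow>
      domination_count \<pi> p q LD_actions \<sigma> \<le> domination_count \<pi> p q LD_actions \<sigma>'"
    using ex_has_least_nat[of "\<lambda>\<sigma>. \<sigma> \<in> ?S \<and> prob_correct \<pi> q \<sigma> = ?m", OF \<sigma>\<^sub>0,
        where m = "domination_count \<pi> p q LD_actions"]
    by blast
  have max\<sigma>: "prob_correct \<pi> q \<sigma>' \<le> prob_correct \<pi> q \<sigma>" if "\<sigma>' \<in> ?S" for \<sigma>'
    using \<sigma> max that by auto
  have "equilibrium \<pi> p q LD_actions \<sigma>"
    unfolding equilibrium_def
  proof
    show "bayes_nash \<pi> p q LD_actions \<sigma>"
      using \<sigma> max\<sigma> by (intro sincere_LD_maximiser_bayes_nash) auto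
    show "\<forall>i. \<not> weakly_dominated \<pi> p q LD_actions i (\<sigma> i)"
      using \<sigma> max\<sigma> min by (intro allI sincere_LD_maximiser_undominated) auto
  qed
  with \<sigma> max\<sigma> show ?thesis
    using that by blast
qed

end

theorem proposition1:
  fixes \<pi> :: real and p :: "'v::finite \<Rightarrow> pref" and q :: "'v \<Rightarrow> real"
  assumes "0 < \<pi>" and "\<pi> < 1"
    and "\<forall>i. 1/2 \<le> q i \<and> q i \<le> 1"
  shows "\<exists>\<sigma>. best_equilibrium \<pi> p q LD_actions \<sigma> \<and>
           (\<forall>\<sigma>'. best_equilibrium \<pi> p q DD_actions \<sigma>' \<longrightarrow> prob_correct \<pi> q \<sigma>' \<le> prob_correct \<pi> q \<sigma>) \<and>
           (\<forall>J \<sigma>'. best_equilibrium \<pi> p q (RD_actions J) \<sigma>' \<longrightarrow> prob_correct \<pi> q \<sigma>' \<le> prob_correct \<pi> q \<sigma>)"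
proof -
  have "0 \<le> q i" and "q i \<le> 1" for i
    using assms(3) by (auto intro: order_trans[of 0 "1/2"])
  with assms(1,2) interpret voting_game \<pi> p q
    by unfold_locales auto
  obtain \<sigma> where eq: "equilibrium \<pi> p q LD_actions \<sigma>"
    and max: "\<And>\<sigma>'. \<sigma>' \<in> sincere_LD_profiles p \<Longrightarrow> prob_correct \<pi> q \<sigma>' \<le> prob_correct \<pi> q \<sigma>"
    using best_sincere_LD_equilibrium_exists by blast
  have bound: "prob_correct \<pi> q \<sigma>' \<le> prob_correct \<pi> q \<sigma>"
    if "reduces_to_LD M" and "equilibrium \<pi> p q M \<sigma>'" for M \<sigma>'
    using equilibrium_prob_correct_in_sincere_LD[OF that] max by metis
  show ?thesis
    using eq bound reduces_to_LD_LD reduces_to_LD_DD reduces_to_LD_RD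
    by (intro exI[of _ \<sigma>]) (auto simp: best_equilibrium_def)
qed

end
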